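(* Suppose the LP relaxation has a unique optimal solution $y^*$ and $y^*(s,1)+y^*(s,0)>0$ for all $s\in\mathbb S$. Then there is a constant $\epsilon_0>0$, depending only on $(\mathbb S,P,r,\alpha)$, such that for every $N$, every policy $\pi$ for the $N$-armed problem and every initial state vector $\mathbf S_0$ for which the long-run averages below exist, $$R^{\mathrm{rel}}-R(\pi,\mathbf S_0)\ge\epsilon_0\lim_{T\to\infty}\frac1T\sum_{t=0}^{T-1}\mathbb E\big[d_{\mathrm{IC}}(Y^\pi_t)\big].$$
   Context: Single-armed MDP $(\mathbb S,\{0,1\},P,r)$, finite $\mathbb S$, budget $\alpha\in(0,1)$. $N$-armed problem ($\alpha N$ integer): arms transition independently by $P$ given states and actions; a policy chooses $A_t(i)\in\{0,1\}$ with $\sum_iA_t(i)=\alpha N$. $R(\pi,\mathbf S_0)=\lim_{T\to\infty}\frac1T\sum_{t<T}\frac1N\sum_i\mathbb E[r(S_t(i),A_t(i))]$. $Y^\pi_t(s,a)=\frac1N\#\{i:S_t(i)=s,A_t(i)=a\}$. LP relaxation: maximize $\sum_{s,a}r(s,a)y(s,a)$ over $y\ge0$ s.t. $\sum_sy(s,1)=\alpha$, $\sum_{s',a}y(s',a)P(s',a,s)=\sum_ay(s,a)$ for all $s$, $\sum_{s,a}y(s,a)=1$; $R^{\mathrm{rel}}$ its optimal value. $S^+=\{s:y^*(s,1)>0,y^*(s,0)=0\}$, $S^-=\{s:y^*(s,1)=0,y^*(s,0)>0\}$, and $d_{\mathrm{IC}}(y)=\sum_{s\in S^+}y(s,0)+\sum_{s\in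 S^-}y(s,1)$. *)

theory Defs
  imports "HOL-Probability.Probability"
begin

text \<open>Single-armed MDP: finite state type 's, actions bool (True = 1, False = 0),
  transition kernel P s a (a pmf on next states, so P(s,a,s') = pmf (P s a) s'),
  reward r s a.\<close>

definition lp_feasible :: "('s::finite \<Rightarrow> bool \<Rightarrow> 's pmf) \<Rightarrow> real \<Rightarrow> ('s \<Rightarrow> bool \<Rightarrow> real) \<Rightarrow> bool" where
  "lp_feasible P \<alpha> y \<longleftrightarrow>
     (\<forall>s a. y s a \<ge> 0) \<and>
     (\<Sum>s\<in>UNIV. y s True) = \<alpha> \<and>
     (\<forall>s. (\<Sum>s'\<in>UNIV. \<Sum>a\<in>UNIV. y s' a * pmf (P s' a) s) = (\<Sum>a\<in>UNIV. y s a)) \<and>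
     (\<Sum>s\<in>UNIV. \<Sum>a\<in>UNIV. y s a) = 1"

definition lp_value :: "('s::finite \<Rightarrow> bool \<Rightarrow> real) \<Rightarrow> ('s \<Rightarrow> bool \<Rightarrow> real) \<Rightarrow> real" where
  "lp_value r y = (\<Sum>s\<in>UNIV. \<Sum>a\<in>UNIV. r s a * y s a)"

definition lp_optimal :: "('s::finite \<Rightarrow> bool \<Rightarrow> 's pmf) \<Rightarrow> ('s \<Rightarrow> bool \<Rightarrow> real) \<Rightarrow> real \<Rightarrow> ('s \<Rightarrow> bool \<Rightarrow> real) \<Rightarrow> bool" where
  "lp_optimal P r \<alpha> y \<longleftrightarrow> lp_feasible P \<alpha> y \<and> (\<forall>y'. lp_feasible P \<alpha> y' \<longrightarrow> lp_value r y' \<le> lp_value r y)"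

definition S_plus :: "('s \<Rightarrow> bool \<Rightarrow> real) \<Rightarrow> 's set" where
  "S_plus ys = {s. ys s True > 0 \<and> ys s False = 0}"

definition S_minus :: "('s \<Rightarrow> bool \<Rightarrow> real) \<Rightarrow> 's set" where
  "S_minus ys = {s. ys s True = 0 \<and> ys s False > 0}"

definition d_IC :: "('s \<Rightarrow> bool \<Rightarrow> real) \<Rightarrow> ('s \<Rightarrow> bool \<Rightarrow> real) \<Rightarrow> real" where
  "d_IC ys y = (\<Sum>s\<in>S_plus ys. y s False) + (\<Sum>s\<in>S_minus ys. y s True)"

text \<open>Joint states: nat \<Rightarrow> 's (arms 0..N-1), joint actions nat \<Rightarrow> bool.
  A history is the list of (state vector, action vector) pairs (S_0,A_0),...,(S_t,A_t).
  A (general, history-dependent, randomized) policy maps the past history and the current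
  state vector to a distribution over action vectors.\<close>

type_synonym ('s) hist = "((nat \<Rightarrow> 's) \<times> (nat \<Rightarrow> bool)) list"

definition admissible_policy :: "nat \<Rightarrow> real \<Rightarrow> ('s hist \<Rightarrow> (nat \<Rightarrow> 's) \<Rightarrow> (nat \<Rightarrow> bool) pmf) \<Rightarrow> bool" where
  "admissible_policy N \<alpha> \<pi> \<longleftrightarrow>
     (\<forall>h x. \<forall>a\<in>set_pmf (\<pi> h x). real (card {i. i < N \<and> a i}) = \<alpha> * real N)"

definition joint_step :: "('s \<Rightarrow> bool \<Rightarrow> 's pmf) \<Rightarrow> nat \<Rightarrow> (nat \<Rightarrow> 's) \<Rightarrow> (nat \<Rightarrow> bool) \<Rightarrow> (nat \<Rightarrow> 's) pmf" where
  "joint_step P N x a = Pi_pmf {..<N} undefined (\<lambda>i. P (x i) (a i))"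

primrec traj :: "('s \<Rightarrow> bool \<Rightarrow> 's pmf) \<Rightarrow> nat \<Rightarrow> ('s hist \<Rightarrow> (nat \<Rightarrow> 's) \<Rightarrow> (nat \<Rightarrow> bool) pmf)
                 \<Rightarrow> (nat \<Rightarrow> 's) \<Rightarrow> nat \<Rightarrow> 's hist pmf" where
  "traj P N \<pi> S0 0 = map_pmf (\<lambda>a. [(S0, a)]) (\<pi> [] S0)"
| "traj P N \<pi> S0 (Suc t) =
     bind_pmf (traj P N \<pi> S0 t) (\<lambda>h.
       bind_pmf (joint_step P N (fst (last h)) (snd (last h))) (\<lambda>x'.
         map_pmf (\<lambda>a'. h @ [(x', a')]) (\<pi> h x')))"

definition Yfreq :: "nat \<Rightarrow> (nat \<Rightarrow> 's) \<Rightarrow> (nat \<Rightarrow> bool) \<Rightarrow> 's \<Rightarrow> bool \<Rightarrow> real" where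
  "Yfreq N x a s b = real (card {i. i < N \<and> x i = s \<and> a i = b}) / real N"

definition exp_reward :: "('s \<Rightarrow> bool \<Rightarrow> 's pmf) \<Rightarrow> ('s \<Rightarrow> bool \<Rightarrow> real) \<Rightarrow> nat
     \<Rightarrow> ('s hist \<Rightarrow> (nat \<Rightarrow> 's) \<Rightarrow> (nat \<Rightarrow> bool) pmf) \<Rightarrow> (nat \<Rightarrow> 's) \<Rightarrow> nat \<Rightarrow> real" where
  "exp_reward P r N \<pi> S0 t = measure_pmf.expectation (traj P N \<pi> S0 t)
     (\<lambda>h. (1 / real N) * (\<Sum>i<N. r (fst (last h) i) (snd (last h) i)))"

definition exp_dIC :: "('s \<Rightarrow> bool \<Rightarrow> 's pmf) \<Rightarrow> ('s \<Rightarrow> bool \<Rightarrow> real) \<Rightarrow> nat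
     \<Rightarrow> ('s hist \<Rightarrow> (nat \<Rightarrow> 's) \<Rightarrow> (nat \<Rightarrow> bool) pmf) \<Rightarrow> (nat \<Rightarrow> 's) \<Rightarrow> nat \<Rightarrow> real" where
  "exp_dIC P ys N \<pi> S0 t = measure_pmf.expectation (traj P N \<pi> S0 t)
     (\<lambda>h. d_IC ys (Yfreq N (fst (last h)) (snd (last h))))"

end

theory Submission
  imports Defs
begin

(* Let ybar_T be the time average over t < T of the expected empirical state-action frequencies
   E[Y_t]. Every E[Y_t] satisfies the budget and normalisation constraints of the LP relaxation,
   and the flow constraint links E[Y_t] to E[Y_(t+1)]; for ybar_T it therefore holds up to a
   telescoping error of order 1/T. Hence every limit point y of ybar_T is LP-feasible, and since
   the reward and d_IC are linear in Y, the long-run averages are R = lp_value r y and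
   D = d_IC ystar y.
   Uniqueness of the optimum ystar makes it sharp: along every nonzero feasible direction at
   ystar the objective strictly decreases, and by compactness of the l1 unit sphere it decreases
   by at least c times the l1 norm of the direction, which dominates d_IC. *)

section \<open>Linear functionals on state-action vectors\<close>

definition weighted_sum :: "('s::finite \<Rightarrow> bool \<Rightarrow> real) \<Rightarrow> ('s \<Rightarrow> bool \<Rightarrow> real) \<Rightarrow> real" where
  "weighted_sum w y = (\<Sum>s\<in>UNIV. \<Sum>a\<in>UNIV. w s a * y s a)"

lemma lp_value_eq_weighted_sum: "lp_value r y = weighted_sum r y"
  by (simp add: lp_value_def weighted_sum_def)

lemma weighted_sum_add_scaled:
  "weighted_sum w (\<lambda>s a. y s a + t * d s a) = weighted_sum w y + t * weighted_sum w d"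
  by (simp add: weighted_sum_def algebra_simps sum.distrib sum_distrib_left)

lemma weighted_sum_scaled: "weighted_sum w (\<lambda>s a. c * d s a) = c * weighted_sum w d"
  by (simp add: weighted_sum_def sum_distrib_left mult_ac)

lemma weighted_sum_diff:
  "weighted_sum w (\<lambda>s a. y s a - z s a) = weighted_sum w y - weighted_sum w z"
  by (simp add: weighted_sum_def right_diff_distrib sum_subtractf)

lemma tendsto_weighted_sum:
  assumes "\<And>s a. (\<lambda>n. y n s a) \<longlonglongrightarrow> l s a"
  shows "(\<lambda>n. weighted_sum w (y n)) \<longlonglongrightarrow> weighted_sum w l"
  unfolding weighted_sum_def by (intro tendsto_intros assms)

lemma weighted_sum_one: "weighted_sum (\<lambda>_ _. 1) y = (\<Sum>s\<in>UNIV. \<Sum>a\<in>UNIV. y s a)"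
  by (simp add: weighted_sum_def)

lemma weighted_sum_active: "weighted_sum (\<lambda>_ a. of_bool a) y = (\<Sum>s\<in>UNIV. y s True)"
  by (simp add: weighted_sum_def UNIV_bool sum.distrib)

lemma weighted_sum_state: "weighted_sum (\<lambda>s' _. of_bool (s' = s)) y = (\<Sum>a\<in>UNIV. y s a)"
  by (simp add: weighted_sum_def sum_distrib_left[symmetric])

definition inflow :: "('s::finite \<Rightarrow> bool \<Rightarrow> 's pmf) \<Rightarrow> ('s \<Rightarrow> bool \<Rightarrow> real) \<Rightarrow> 's \<Rightarrow> real" where
  "inflow P y s = (\<Sum>s'\<in>UNIV. \<Sum>a\<in>UNIV. y s' a * pmf (P s' a) s)"

lemma inflow_eq_weighted_sum: "inflow P y s = weighted_sum (\<lambda>s' a. pmf (P s' a) s) y"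
  by (simp add: inflow_def weighted_sum_def mult.commute)

definition IC_weight :: "('s \<Rightarrow> bool \<Rightarrow> real) \<Rightarrow> 's \<Rightarrow> bool \<Rightarrow> real" where
  "IC_weight ys s a = of_bool (if a then s \<in> S_minus ys else s \<in> S_plus ys)"

lemma d_IC_eq_weighted_sum: "d_IC ys y = weighted_sum (IC_weight ys) y"
proof -
  have "weighted_sum (IC_weight ys) y
      = (\<Sum>s\<in>UNIV. of_bool (s \<in> S_plus ys) * y s False) + (\<Sum>s\<in>UNIV. of_bool (s \<in> S_minus ys) * y s True)"
    by (simp add: weighted_sum_def IC_weight_def UNIV_bool sum.distrib del: sum_of_bool_mult_eq)
  then show ?thesis by (simp add: d_IC_def)
qed

definition l1_norm :: "('s::finite \<Rightarrow> bool \<Rightarrow> real) \<Rightarrow> real" where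
  "l1_norm d = (\<Sum>s\<in>UNIV. \<Sum>a\<in>UNIV. \<bar>d s a\<bar>)"

lemma l1_norm_scaled: "l1_norm (\<lambda>s a. c * d s a) = \<bar>c\<bar> * l1_norm d"
  by (simp add: l1_norm_def abs_mult sum_distrib_left)

lemma l1_norm_eq_0_iff: "l1_norm d = 0 \<longleftrightarrow> d = (\<lambda>s a. 0)"
  by (simp add: l1_norm_def sum_nonneg sum_nonneg_eq_0_iff fun_eq_iff)

lemma abs_le_l1_norm: "\<bar>d s a\<bar> \<le> l1_norm d"
proof -
  have "\<bar>d s a\<bar> \<le> (\<Sum>a\<in>UNIV. \<bar>d s a\<bar>)" by (rule member_le_sum) auto
  also have "\<dots> \<le> l1_norm d" unfolding l1_norm_def by (rule member_le_sum) (auto intro: sum_nonneg)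
  finally show ?thesis .
qed

lemma d_IC_le_l1_norm: "d_IC ys d \<le> l1_norm d"
  unfolding d_IC_eq_weighted_sum weighted_sum_def l1_norm_def
  by (intro sum_mono) (auto simp: IC_weight_def)

lemma tendsto_l1_norm:
  assumes "\<And>s a. (\<lambda>n. d n s a) \<longlonglongrightarrow> l s a"
  shows "(\<lambda>n. l1_norm (d n)) \<longlonglongrightarrow> l1_norm l"
  unfolding l1_norm_def by (intro tendsto_intros assms)

lemma bounded_seq_convergent_subseq:
  fixes x :: "nat \<Rightarrow> 's::finite \<Rightarrow> bool \<Rightarrow> real"
  assumes bound: "\<And>n s a. \<bar>x n s a\<bar> \<le> B"
  obtains \<sigma> l where "strict_mono \<sigma>" "\<And>s a. (\<lambda>n. x (\<sigma> n) s a) \<longlonglongrightarrow> l s a"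
proof -
  define v where "v n = ((\<chi> p. x n (fst p) (snd p)) :: real^('s \<times> bool))" for n
  have "norm (v n) \<le> real CARD('s \<times> bool) * B" for n
  proof -
    have "norm (v n) \<le> (\<Sum>i\<in>UNIV. \<bar>v n $ i\<bar>)" by (rule norm_le_l1_cart)
    also have "\<dots> \<le> (\<Sum>i\<in>(UNIV::('s \<times> bool) set). B)"
      by (rule sum_mono) (simp add: v_def bound)
    finally show ?thesis by simp
  qed
  then have "bounded (range v)" by (auto simp: bounded_iff)
  then obtain l \<sigma> where \<sigma>: "strict_mono \<sigma>" and lim: "(v \<circ> \<sigma>) \<longlonglongrightarrow> l"
    using bounded_imp_convergent_subsequence by blast
  have "(\<lambda>n. x (\<sigma> n) s a) \<longlonglongrightarrow> l $ (s, a)" for s a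
    using tendsto_vec_nth[OF lim, of "(s, a)"] by (simp add: v_def)
  then show ?thesis by (rule that[OF \<sigma>])
qed

section \<open>Sharpness of a unique LP optimum\<close>

definition feasible_direction :: "('s::finite \<Rightarrow> bool \<Rightarrow> 's pmf) \<Rightarrow> ('s \<Rightarrow> bool \<Rightarrow> real) \<Rightarrow> ('s \<Rightarrow> bool \<Rightarrow> real) \<Rightarrow> bool" where
  "feasible_direction P ys d \<longleftrightarrow>
     (\<Sum>s\<in>UNIV. d s True) = 0 \<and>
     (\<forall>s. inflow P d s = (\<Sum>a\<in>UNIV. d s a)) \<and>
     (\<Sum>s\<in>UNIV. \<Sum>a\<in>UNIV. d s a) = 0 \<and>
     (\<forall>s a. ys s a = 0 \<longrightarrow> 0 \<le> d s a)"

lemma feasible_direction_diff: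
  assumes "lp_feasible P \<alpha> y" and "lp_feasible P \<alpha> ys"
  shows "feasible_direction P ys (\<lambda>s a. y s a - ys s a)"
  using assms unfolding feasible_direction_def lp_feasible_def inflow_def
  by (simp add: sum_subtractf left_diff_distrib)

lemma feasible_direction_scaled:
  assumes "feasible_direction P ys d" and "0 \<le> c"
  shows "feasible_direction P ys (\<lambda>s a. c * d s a)"
  using assms unfolding feasible_direction_def inflow_def
  by (simp add: sum_distrib_left[symmetric] mult.assoc)

lemma feasible_direction_limit:
  assumes dir: "\<And>n. feasible_direction P ys (d n)"
    and lim: "\<And>s a. (\<lambda>n. d n s a) \<longlonglongrightarrow> l s a"
  shows "feasible_direction P ys l"
  unfolding feasible_direction_def
proof (intro conjI allI impI)
  show "(\<Sum>s\<in>UNIV. l s True) = 0"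
    using dir by (intro LIMSEQ_unique[OF tendsto_sum[OF lim]]) (simp add: feasible_direction_def)
  show "(\<Sum>s\<in>UNIV. \<Sum>a\<in>UNIV. l s a) = 0"
    using dir by (intro LIMSEQ_unique[OF tendsto_sum[OF tendsto_sum[OF lim]]])
      (simp add: feasible_direction_def)
  fix s
  have "(\<lambda>n. inflow P (d n) s - (\<Sum>a\<in>UNIV. d n s a)) \<longlonglongrightarrow> inflow P l s - (\<Sum>a\<in>UNIV. l s a)"
    unfolding inflow_def by (intro tendsto_intros lim)
  moreover have "(\<lambda>n. inflow P (d n) s - (\<Sum>a\<in>UNIV. d n s a)) = (\<lambda>n. 0)"
    using dir by (simp add: feasible_direction_def)
  ultimately show "inflow P l s = (\<Sum>a\<in>UNIV. l s a)"
    using LIMSEQ_unique tendsto_const by fastforce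
next
  fix s a assume "ys s a = 0"
  then show "0 \<le> l s a"
    using dir by (intro LIMSEQ_le_const[OF lim]) (auto simp: feasible_direction_def)
qed

lemma feasible_direction_step:
  assumes feas: "lp_feasible P \<alpha> ys" and dir: "feasible_direction P ys d"
  obtains t where "0 < t" "lp_feasible P \<alpha> (\<lambda>s a. ys s a + t * d s a)"
proof -
  have ys_nonneg: "0 \<le> ys s a" for s a using feas by (simp add: lp_feasible_def)
  define M where "M = {ys s a / - d s a | s a. d s a < 0}"
  have "finite M"
    by (rule finite_subset[of _ "(\<lambda>(s, a). ys s a / - d s a) ` UNIV"]) (auto simp: M_def)
  moreover have "0 < m" if "m \<in> M" for m
  proof -
    obtain s a where m: "m = ys s a / - d s a" and neg: "d s a < 0" using \<open>m \<in> M\<close> M_def by blast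
    then have "ys s a \<noteq> 0" using dir by (force simp: feasible_direction_def)
    then show ?thesis using m neg ys_nonneg[of s a] by (simp add: divide_pos_neg)
  qed
  ultimately have "0 < Min (insert 1 M)" and Min_le: "\<And>m. m \<in> M \<Longrightarrow> Min (insert 1 M) \<le> m"
    by (auto simp: Min_gr_iff)
  define t where "t = Min (insert 1 M)"
  have "0 \<le> ys s a + t * d s a" for s a
  proof (cases "d s a < 0")
    case True
    then have "t \<le> ys s a / - d s a" using Min_le unfolding t_def M_def by blast
    then have "t * - d s a \<le> ys s a / - d s a * - d s a" using True by (intro mult_right_mono) auto
    then show ?thesis using True by simp
  next
    case False
    then show ?thesis using \<open>0 < Min (insert 1 M)\<close> ys_nonneg[of s a] by (simp add: t_def)
  qed
  then have "lp_feasible P \<alpha> (\<lambda>s a. ys s a + t * d s a)"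
    using feas dir unfolding lp_feasible_def feasible_direction_def inflow_def
    by (simp add: algebra_simps sum.distrib sum_distrib_left[symmetric])
  then show ?thesis using that \<open>0 < Min (insert 1 M)\<close> t_def by blast
qed

lemma unique_optimum_strict_descent:
  assumes opt: "lp_optimal P r \<alpha> ystar"
    and uniq: "\<forall>y. lp_optimal P r \<alpha> y \<longrightarrow> y = ystar"
    and dir: "feasible_direction P ystar d" and nonzero: "d \<noteq> (\<lambda>s a. 0)"
  shows "lp_value r d < 0"
proof -
  have "lp_feasible P \<alpha> ystar" using opt by (simp add: lp_optimal_def)
  then obtain t where t: "0 < t" and feas: "lp_feasible P \<alpha> (\<lambda>s a. ystar s a + t * d s a)"
    using dir by (rule feasible_direction_step)
  have step_value: "lp_value r (\<lambda>s a. ystar s a + t * d s a) = lp_value r ystar + t * lp_value r d"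
    by (simp add: lp_value_eq_weighted_sum weighted_sum_add_scaled)
  have "lp_value r (\<lambda>s a. ystar s a + t * d s a) \<le> lp_value r ystar"
    using opt feas by (simp add: lp_optimal_def)
  then have "t * lp_value r d \<le> 0" using step_value by simp
  moreover have "lp_value r d \<noteq> 0"
  proof
    assume "lp_value r d = 0"
    then have "lp_optimal P r \<alpha> (\<lambda>s a. ystar s a + t * d s a)"
      using opt feas step_value by (simp add: lp_optimal_def)
    then have "(\<lambda>s a. ystar s a + t * d s a) = ystar" using uniq by blast
    then have "d = (\<lambda>s a. 0)" using t by (simp add: fun_eq_iff)
    then show False using nonzero by contradiction
  qed
  ultimately show ?thesis using t by (simp add: mult_le_0_iff)
qed

lemma feasible_direction_accumulation:
  assumes dir: "\<And>n. feasible_direction P ys (e n)" and unit: "\<And>n. l1_norm (e n) = 1"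
    and small: "\<And>n. - lp_value r (e n) \<le> inverse (real (Suc n))"
  obtains l where "feasible_direction P ys l" "l \<noteq> (\<lambda>s a. 0)" "0 \<le> lp_value r l"
proof -
  obtain \<sigma> l where \<sigma>: "strict_mono \<sigma>" and lim: "\<And>s a. (\<lambda>n. e (\<sigma> n) s a) \<longlonglongrightarrow> l s a"
    using bounded_seq_convergent_subseq[of e 1] abs_le_l1_norm unit by metis
  have "feasible_direction P ys l" using dir lim by (rule feasible_direction_limit)
  moreover have "l \<noteq> (\<lambda>s a. 0)"
  proof -
    have "(\<lambda>n. l1_norm (e (\<sigma> n))) \<longlonglongrightarrow> l1_norm l" using lim by (rule tendsto_l1_norm)
    then have "l1_norm l = 1" using unit by (simp add: LIMSEQ_const_iff)
    then show ?thesis by (auto simp: l1_norm_eq_0_iff[symmetric])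
  qed
  moreover have "- lp_value r l \<le> 0"
  proof (rule LIMSEQ_le)
    show "(\<lambda>n. - lp_value r (e (\<sigma> n))) \<longlonglongrightarrow> - lp_value r l"
      unfolding lp_value_eq_weighted_sum by (intro tendsto_intros tendsto_weighted_sum lim)
    show "(\<lambda>n. inverse (real (Suc n))) \<longlonglongrightarrow> 0" by (rule LIMSEQ_inverse_real_of_nat)
    have "inverse (real (Suc (\<sigma> n))) \<le> inverse (real (Suc n))" for n
      using seq_suble[OF \<sigma>, of n] by (intro le_imp_inverse_le) auto
    then show "\<exists>N. \<forall>n\<ge>N. - lp_value r (e (\<sigma> n)) \<le> inverse (real (Suc n))"
      using small order_trans by blast
  qed
  ultimately show ?thesis using that by simp
qed

lemma unique_optimum_sharp:
  assumes opt: "lp_optimal P r \<alpha> ystar"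
    and uniq: "\<forall>y. lp_optimal P r \<alpha> y \<longrightarrow> y = ystar"
  obtains c where "0 < c" "\<And>d. feasible_direction P ystar d \<Longrightarrow> c * l1_norm d \<le> - lp_value r d"
proof (rule ccontr)
  assume "\<not> thesis"
  have "\<exists>d. feasible_direction P ystar d \<and> - lp_value r d < inverse (real (Suc n)) * l1_norm d" for n
  proof (rule ccontr)
    assume "\<nexists>d. feasible_direction P ystar d \<and> - lp_value r d < inverse (real (Suc n)) * l1_norm d"
    then have "\<And>d. feasible_direction P ystar d \<Longrightarrow> inverse (real (Suc n)) * l1_norm d \<le> - lp_value r d"
      by (auto simp: not_less)
    then show False using that[of "inverse (real (Suc n))"] \<open>\<not> thesis\<close> by simp
  qed
  then obtain d where dir: "\<And>n. feasible_direction P ystar (d n)"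
    and small: "\<And>n. - lp_value r (d n) < inverse (real (Suc n)) * l1_norm (d n)"
    by metis
  have norm_pos: "0 < l1_norm (d n)" for n
  proof -
    have "l1_norm (d n) \<noteq> 0"
    proof
      assume "l1_norm (d n) = 0"
      then have "d n = (\<lambda>s a. 0)" by (simp add: l1_norm_eq_0_iff)
      then show False using small[of n] \<open>l1_norm (d n) = 0\<close> by (simp add: lp_value_def)
    qed
    then show ?thesis by (simp add: l1_norm_def sum_nonneg order_le_neq_trans)
  qed
  define e where "e n = (\<lambda>s a. inverse (l1_norm (d n)) * d n s a)" for n
  have "feasible_direction P ystar (e n)" for n
    unfolding e_def using dir norm_pos by (simp add: feasible_direction_scaled less_imp_le)
  moreover have "l1_norm (e n) = 1" for n
    unfolding e_def l1_norm_scaled using norm_pos[of n] by simp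
  moreover have "- lp_value r (e n) \<le> inverse (real (Suc n))" for n
  proof -
    have "- lp_value r (e n) = inverse (l1_norm (d n)) * - lp_value r (d n)"
      unfolding e_def lp_value_eq_weighted_sum weighted_sum_scaled by simp
    also have "\<dots> \<le> inverse (l1_norm (d n)) * (inverse (real (Suc n)) * l1_norm (d n))"
      using small[of n] norm_pos[of n] by (intro mult_left_mono) auto
    also have "\<dots> = inverse (real (Suc n))" using norm_pos[of n] by simp
    finally show ?thesis .
  qed
  ultimately obtain l where "feasible_direction P ystar l" "l \<noteq> (\<lambda>s a. 0)" "0 \<le> lp_value r l"
    by (rule feasible_direction_accumulation)
  then show False using unique_optimum_strict_descent[OF opt uniq] by force
qed

lemma unique_optimum_d_IC_bound:
  assumes opt: "lp_optimal P r \<alpha> ystar"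
    and uniq: "\<forall>y. lp_optimal P r \<alpha> y \<longrightarrow> y = ystar"
  obtains c where "0 < c"
    "\<And>y. lp_feasible P \<alpha> y \<Longrightarrow> c * d_IC ystar y \<le> lp_value r ystar - lp_value r y"
proof -
  obtain c where c: "0 < c" and sharp: "\<And>d. feasible_direction P ystar d \<Longrightarrow> c * l1_norm d \<le> - lp_value r d"
    using unique_optimum_sharp[OF opt uniq] by blast
  have "c * d_IC ystar y \<le> lp_value r ystar - lp_value r y" if feas: "lp_feasible P \<alpha> y" for y
  proof -
    define d where "d = (\<lambda>s a. y s a - ystar s a)"
    have "feasible_direction P ystar d"
      unfolding d_def using feas opt by (simp add: feasible_direction_diff lp_optimal_def)
    \<comment> \<open>\<open>ystar\<close> vanishes on the coordinates counted by \<open>d_IC ystar\<close>\<close>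
    have "d_IC ystar y = d_IC ystar d"
      unfolding d_IC_def d_def by (auto simp: S_plus_def S_minus_def intro!: arg_cong2[where f="(+)"] sum.cong)
    also have "\<dots> \<le> l1_norm d" by (rule d_IC_le_l1_norm)
    finally have "c * d_IC ystar y \<le> c * l1_norm d" using c by simp
    also have "\<dots> \<le> - lp_value r d" using sharp \<open>feasible_direction P ystar d\<close> by blast
    also have "\<dots> = lp_value r ystar - lp_value r y"
      unfolding d_def lp_value_eq_weighted_sum weighted_sum_diff by simp
    finally show ?thesis .
  qed
  with c show ?thesis using that by blast
qed

section \<open>Limit points of time-averaged occupation measures\<close>

definition time_avg :: "(nat \<Rightarrow> 's \<Rightarrow> bool \<Rightarrow> real) \<Rightarrow> nat \<Rightarrow> 's \<Rightarrow> bool \<Rightarrow> real" where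
  "time_avg E T s a = (1 / real T) * (\<Sum>t<T. E t s a)"

lemma weighted_sum_time_avg:
  "weighted_sum w (time_avg E T) = (1 / real T) * (\<Sum>t<T. weighted_sum w (E t))"
  unfolding weighted_sum_def time_avg_def
  by (simp add: sum_distrib_left sum_distrib_right mult_ac sum.swap[of _ "{..<T}"])

lemma time_avg_balance_defect:
  assumes flow: "\<And>t. inflow P (E t) s = (\<Sum>a\<in>UNIV. E (Suc t) s a)"
  shows "inflow P (time_avg E T) s - (\<Sum>a\<in>UNIV. time_avg E T s a)
    = (1 / real T) * ((\<Sum>a\<in>UNIV. E T s a) - (\<Sum>a\<in>UNIV. E 0 s a))"
proof -
  have "inflow P (time_avg E T) s = (1 / real T) * (\<Sum>t<T. \<Sum>a\<in>UNIV. E (Suc t) s a)"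
    by (simp add: inflow_eq_weighted_sum weighted_sum_time_avg flow[unfolded inflow_eq_weighted_sum])
  moreover have "(\<Sum>a\<in>UNIV. time_avg E T s a) = (1 / real T) * (\<Sum>t<T. \<Sum>a\<in>UNIV. E t s a)"
    by (simp add: weighted_sum_state[symmetric] weighted_sum_time_avg)
  moreover have "(\<Sum>t<T. (\<Sum>a\<in>UNIV. E (Suc t) s a) - (\<Sum>a\<in>UNIV. E t s a))
      = (\<Sum>a\<in>UNIV. E T s a) - (\<Sum>a\<in>UNIV. E 0 s a)"
    by (rule sum_lessThan_telescope)
  ultimately show ?thesis by (simp add: sum_subtractf) (metis diff_divide_distrib)
qed

lemma distribution_bounds:
  fixes y :: "'s::finite \<Rightarrow> bool \<Rightarrow> real"
  assumes nonneg: "\<And>s a. 0 \<le> y s a" and total: "(\<Sum>s\<in>UNIV. \<Sum>a\<in>UNIV. y s a) = 1"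
  shows "(\<Sum>a\<in>UNIV. y s a) \<le> 1" and "y s a \<le> 1"
proof -
  have "(\<Sum>a\<in>UNIV. y s a) \<le> (\<Sum>s\<in>UNIV. \<Sum>a\<in>UNIV. y s a)"
    by (rule member_le_sum) (simp_all add: nonneg sum_nonneg)
  then show mass: "(\<Sum>a\<in>UNIV. y s a) \<le> 1" using total by simp
  have "y s a \<le> (\<Sum>a\<in>UNIV. y s a)" by (rule member_le_sum) (simp_all add: nonneg)
  then show "y s a \<le> 1" using mass by linarith
qed

lemma time_avg_balance_defect_tendsto_0:
  fixes E :: "nat \<Rightarrow> 's::finite \<Rightarrow> bool \<Rightarrow> real"
  assumes nonneg: "\<And>t s a. 0 \<le> E t s a"
    and total: "\<And>t. (\<Sum>s\<in>UNIV. \<Sum>a\<in>UNIV. E t s a) = 1"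
    and flow: "\<And>t. inflow P (E t) s = (\<Sum>a\<in>UNIV. E (Suc t) s a)"
  shows "(\<lambda>T. inflow P (time_avg E T) s - (\<Sum>a\<in>UNIV. time_avg E T s a)) \<longlonglongrightarrow> 0"
proof (rule Lim_null_comparison)
  show "\<forall>\<^sub>F T in sequentially.
      norm (inflow P (time_avg E T) s - (\<Sum>a\<in>UNIV. time_avg E T s a)) \<le> 1 / real T"
  proof (intro always_eventually allI)
    fix T
    have "\<bar>(\<Sum>a\<in>UNIV. E T s a) - (\<Sum>a\<in>UNIV. E 0 s a)\<bar> \<le> 1"
      using distribution_bounds(1)[OF nonneg total, of T s] distribution_bounds(1)[OF nonneg total, of 0 s]
        sum_nonneg[of UNIV "E T s"] sum_nonneg[of UNIV "E 0 s"] nonneg by fastforce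
    then show "norm (inflow P (time_avg E T) s - (\<Sum>a\<in>UNIV. time_avg E T s a)) \<le> 1 / real T"
      by (simp add: time_avg_balance_defect[of P E s, OF flow] abs_mult divide_right_mono)
  qed
  show "(\<lambda>T. 1 / real T) \<longlonglongrightarrow> 0" by (rule lim_const_over_n)
qed

lemma time_avg_limit_point_feasible:
  fixes E :: "nat \<Rightarrow> 's::finite \<Rightarrow> bool \<Rightarrow> real"
  assumes nonneg: "\<And>t s a. 0 \<le> E t s a"
    and total: "\<And>t. (\<Sum>s\<in>UNIV. \<Sum>a\<in>UNIV. E t s a) = 1"
    and budget: "\<And>t. (\<Sum>s\<in>UNIV. E t s True) = \<alpha>"
    and flow: "\<And>t s. inflow P (E t) s = (\<Sum>a\<in>UNIV. E (Suc t) s a)"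
  obtains \<sigma> y where "strict_mono \<sigma>" "\<And>s a. (\<lambda>n. time_avg E (\<sigma> n) s a) \<longlonglongrightarrow> y s a"
    "lp_feasible P \<alpha> y"
proof -
  have avg_nonneg: "0 \<le> time_avg E T s a" for T s a
    unfolding time_avg_def by (simp add: nonneg sum_nonneg)
  have "time_avg E T s a \<le> 1" for T s a
  proof -
    have "(\<Sum>t<T. E t s a) \<le> real T"
      using sum_mono[of "{..<T}" "\<lambda>t. E t s a" "\<lambda>_. 1"] distribution_bounds(2)[OF nonneg total] by simp
    then show ?thesis by (cases "T = 0") (simp_all add: time_avg_def divide_le_eq_1)
  qed
  then have avg_bound: "\<bar>time_avg E T s a\<bar> \<le> 1" for T s a by (simp add: avg_nonneg)
  obtain \<sigma> y where \<sigma>: "strict_mono \<sigma>" and lim: "\<And>s a. (\<lambda>n. time_avg E (\<sigma> n) s a) \<longlonglongrightarrow> y s a"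
    using bounded_seq_convergent_subseq[of "time_avg E" 1, OF avg_bound] by blast
  have eventually_pos: "eventually (\<lambda>n. 0 < \<sigma> n) sequentially"
    using seq_suble[OF \<sigma>] by (intro eventually_sequentiallyI[of 1]) (metis less_le_trans zero_less_one)
  have "lp_feasible P \<alpha> y"
    unfolding lp_feasible_def
  proof (intro conjI allI)
    show "0 \<le> y s a" for s a by (rule LIMSEQ_le_const[OF lim]) (simp add: avg_nonneg)
    have "eventually (\<lambda>n. (\<Sum>s\<in>UNIV. time_avg E (\<sigma> n) s True) = \<alpha>) sequentially"
      using eventually_pos
      by eventually_elim
        (use weighted_sum_time_avg[of "\<lambda>_ a. of_bool a" E] in \<open>simp add: weighted_sum_active budget\<close>)
    then show "(\<Sum>s\<in>UNIV. y s True) = \<alpha>"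
      by (intro LIMSEQ_unique[OF tendsto_sum[OF lim]] tendsto_eventually)
    have "eventually (\<lambda>n. (\<Sum>s\<in>UNIV. \<Sum>a\<in>UNIV. time_avg E (\<sigma> n) s a) = 1) sequentially"
      using eventually_pos
      by eventually_elim
        (use weighted_sum_time_avg[of "\<lambda>_ _. 1" E] in \<open>simp add: weighted_sum_one total\<close>)
    then show "(\<Sum>s\<in>UNIV. \<Sum>a\<in>UNIV. y s a) = 1"
      by (intro LIMSEQ_unique[OF tendsto_sum[OF tendsto_sum[OF lim]]] tendsto_eventually)
  next
    fix s
    let ?defect = "\<lambda>y. inflow P y s - (\<Sum>a\<in>UNIV. y s a)"
    have "(\<lambda>n. ?defect (time_avg E (\<sigma> n))) \<longlonglongrightarrow> ?defect y"
      unfolding inflow_def by (intro tendsto_intros lim)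
    moreover have "(\<lambda>n. ?defect (time_avg E (\<sigma> n))) \<longlonglongrightarrow> 0"
      using LIMSEQ_subseq_LIMSEQ[OF time_avg_balance_defect_tendsto_0[of E P s, OF nonneg total flow] \<sigma>]
      by (simp add: o_def)
    ultimately have "?defect y = 0" by (rule LIMSEQ_unique)
    then show "(\<Sum>s'\<in>UNIV. \<Sum>a\<in>UNIV. y s' a * pmf (P s' a) s) = (\<Sum>a\<in>UNIV. y s a)"
      by (simp add: inflow_def)
  qed
  with \<sigma> lim that show ?thesis by blast
qed

lemma time_avg_limit_weighted_sum:
  assumes avg: "(\<lambda>T. (1 / real T) * (\<Sum>t<T. weighted_sum w (E t))) \<longlonglongrightarrow> L"
    and \<sigma>: "strict_mono \<sigma>" and lim: "\<And>s a. (\<lambda>n. time_avg E (\<sigma> n) s a) \<longlonglongrightarrow> y s a"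
  shows "L = weighted_sum w y"
proof (rule LIMSEQ_unique)
  show "(\<lambda>n. weighted_sum w (time_avg E (\<sigma> n))) \<longlonglongrightarrow> L"
    using LIMSEQ_subseq_LIMSEQ[OF avg \<sigma>] by (simp add: o_def weighted_sum_time_avg)
  show "(\<lambda>n. weighted_sum w (time_avg E (\<sigma> n))) \<longlonglongrightarrow> weighted_sum w y"
    using lim by (rule tendsto_weighted_sum)
qed

section \<open>Expected empirical frequencies of the N-armed system\<close>

lemma expectation_bind_pmf:
  fixes f :: "'b \<Rightarrow> real"
  assumes "\<And>x. \<bar>f x\<bar> \<le> B"
  shows "measure_pmf.expectation (bind_pmf p q) f
    = measure_pmf.expectation p (\<lambda>x. measure_pmf.expectation (q x) f)"
  unfolding measure_pmf_bind
  using assms measurable_measure_pmf[of q]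
  by (intro integral_bind[where K="count_space UNIV" and B=B and B'=1])
    (auto simp: measure_pmf.emeasure_space_1 intro: measure_pmf.finite_measure)

lemma expectation_traj_Suc:
  fixes f :: "(nat \<Rightarrow> 's) \<Rightarrow> real"
  assumes "\<And>x. \<bar>f x\<bar> \<le> B"
  shows "measure_pmf.expectation (traj P N \<pi> S0 (Suc t)) (\<lambda>h. f (fst (last h)))
    = measure_pmf.expectation (traj P N \<pi> S0 t)
        (\<lambda>h. measure_pmf.expectation (joint_step P N (fst (last h)) (snd (last h))) f)"
  using assms by (simp add: expectation_bind_pmf[where B=B])

lemma expectation_joint_step_state:
  assumes "i < N"
  shows "measure_pmf.expectation (joint_step P N x a) (\<lambda>x'. of_bool (x' i = s) :: real)
    = pmf (P (x i) (a i)) s"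
proof -
  have "measure_pmf.expectation (joint_step P N x a) (\<lambda>x'. of_bool (x' i = s) :: real)
      = measure_pmf.expectation (map_pmf (\<lambda>x'. x' i) (joint_step P N x a)) (indicator {s})"
    by (simp only: integral_map_pmf) (simp add: indicator_def)
  also have "map_pmf (\<lambda>x'. x' i) (joint_step P N x a) = P (x i) (a i)"
    unfolding joint_step_def using assms by (subst Pi_pmf_component) auto
  finally show ?thesis by (simp add: measure_pmf_single)
qed

lemma sum_indicator_state_action:
  fixes w :: "'s::finite \<Rightarrow> bool \<Rightarrow> real"
  shows "(\<Sum>s\<in>UNIV. \<Sum>b\<in>UNIV. w s b * of_bool (x i = s \<and> a i = b)) = w (x i) (a i)"
proof -
  have "(\<Sum>b\<in>UNIV. w s b * of_bool (x i = s \<and> a i = b)) = (if s = x i then w s (a i) else 0)" for s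
    by (cases "s = x i") (auto simp: UNIV_bool)
  then show ?thesis by (simp add: sum.delta)
qed

lemma weighted_sum_Yfreq:
  fixes w :: "'s::finite \<Rightarrow> bool \<Rightarrow> real"
  shows "weighted_sum w (Yfreq N x a) = (1 / real N) * (\<Sum>i<N. w (x i) (a i))"
proof -
  have "(\<Sum>i<N. w (x i) (a i)) = (\<Sum>i<N. \<Sum>s\<in>UNIV. \<Sum>b\<in>UNIV. w s b * of_bool (x i = s \<and> a i = b))"
    by (simp only: sum_indicator_state_action)
  also have "\<dots> = (\<Sum>s\<in>UNIV. \<Sum>b\<in>UNIV. w s b * (\<Sum>i<N. of_bool (x i = s \<and> a i = b)))"
    by (simp add: sum.swap[of _ "{..<N}"] sum_distrib_left del: sum_mult_of_bool_eq sum_of_bool_eq)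
  also have "\<dots> = (\<Sum>s\<in>UNIV. \<Sum>b\<in>UNIV. w s b * real (card {i. i < N \<and> x i = s \<and> a i = b}))"
    by (simp add: Int_def)
  finally show ?thesis
    by (simp add: weighted_sum_def Yfreq_def sum_distrib_left mult_ac)
qed

lemma Yfreq_nonneg: "0 \<le> Yfreq N x a s b"
  by (simp add: Yfreq_def)

lemma Yfreq_le_1: "Yfreq N x a s b \<le> 1"
proof -
  have "card {i. i < N \<and> x i = s \<and> a i = b} \<le> card {..<N}" by (rule card_mono) auto
  then show ?thesis by (auto simp: Yfreq_def divide_le_eq_1)
qed

definition exp_Yfreq :: "('s \<Rightarrow> bool \<Rightarrow> 's pmf) \<Rightarrow> nat \<Rightarrow> ('s hist \<Rightarrow> (nat \<Rightarrow> 's) \<Rightarrow> (nat \<Rightarrow> bool) pmf)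
    \<Rightarrow> (nat \<Rightarrow> 's) \<Rightarrow> nat \<Rightarrow> 's \<Rightarrow> bool \<Rightarrow> real" where
  "exp_Yfreq P N \<pi> S0 t s a =
     measure_pmf.expectation (traj P N \<pi> S0 t) (\<lambda>h. Yfreq N (fst (last h)) (snd (last h)) s a)"

lemma weighted_sum_exp_Yfreq:
  fixes w :: "'s::finite \<Rightarrow> bool \<Rightarrow> real"
  shows "weighted_sum w (exp_Yfreq P N \<pi> S0 t)
    = measure_pmf.expectation (traj P N \<pi> S0 t) (\<lambda>h. weighted_sum w (Yfreq N (fst (last h)) (snd (last h))))"
proof -
  have "integrable (traj P N \<pi> S0 t) (\<lambda>h. Yfreq N (fst (last h)) (snd (last h)) s a)" for s a
    by (rule measure_pmf.integrable_const_bound[where B=1]) (simp_all add: Yfreq_nonneg Yfreq_le_1)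
  then show ?thesis
    by (simp add: weighted_sum_def exp_Yfreq_def integral_sum integrable_sum)
qed

lemma exp_reward_eq_lp_value:
  "exp_reward P r N \<pi> S0 t = lp_value r (exp_Yfreq P N \<pi> S0 t)"
  by (simp add: exp_reward_def lp_value_eq_weighted_sum weighted_sum_exp_Yfreq weighted_sum_Yfreq)

lemma exp_dIC_eq_d_IC:
  fixes ys :: "'s::finite \<Rightarrow> bool \<Rightarrow> real"
  shows "exp_dIC P ys N \<pi> S0 t = d_IC ys (exp_Yfreq P N \<pi> S0 t)"
  by (simp add: exp_dIC_def d_IC_eq_weighted_sum weighted_sum_exp_Yfreq)

lemma exp_Yfreq_nonneg: "0 \<le> exp_Yfreq P N \<pi> S0 t s a"
  unfolding exp_Yfreq_def by (rule integral_nonneg_AE) (simp add: Yfreq_nonneg)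

lemma exp_Yfreq_total:
  fixes P :: "'s::finite \<Rightarrow> bool \<Rightarrow> 's pmf"
  assumes "0 < N"
  shows "(\<Sum>s\<in>UNIV. \<Sum>a\<in>UNIV. exp_Yfreq P N \<pi> S0 t s a) = 1"
  using assms by (simp add: weighted_sum_one[symmetric] weighted_sum_exp_Yfreq weighted_sum_Yfreq)

lemma traj_last_action:
  "h \<in> set_pmf (traj P N \<pi> S0 t) \<Longrightarrow> \<exists>h' x. snd (last h) \<in> set_pmf (\<pi> h' x)"
  by (cases t) (auto, blast+)

lemma exp_Yfreq_budget:
  fixes P :: "'s::finite \<Rightarrow> bool \<Rightarrow> 's pmf"
  assumes N: "0 < N" and adm: "admissible_policy N \<alpha> \<pi>"
  shows "(\<Sum>s\<in>UNIV. exp_Yfreq P N \<pi> S0 t s True) = \<alpha>"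
proof -
  have "(1 / real N) * (\<Sum>i<N. of_bool (snd (last h) i)) = \<alpha>"
    if h: "h \<in> set_pmf (traj P N \<pi> S0 t)" for h
  proof -
    obtain h' x where "snd (last h) \<in> set_pmf (\<pi> h' x)"
      using traj_last_action[OF h] by blast
    then have "real (card {i. i < N \<and> snd (last h) i}) = \<alpha> * real N"
      using adm by (auto simp: admissible_policy_def)
    moreover have "{..<N} \<inter> {i. snd (last h) i} = {i. i < N \<and> snd (last h) i}" by auto
    ultimately show ?thesis using N by simp
  qed
  then have "measure_pmf.expectation (traj P N \<pi> S0 t)
      (\<lambda>h. (1 / real N) * (\<Sum>i<N. of_bool (snd (last h) i))) = measure_pmf.expectation (traj P N \<pi> S0 t) (\<lambda>_. \<alpha>)"
    by (intro integral_cong_AE) (simp_all add: AE_pmfI del: sum_of_bool_eq)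
  then show ?thesis
    by (simp add: weighted_sum_active[symmetric] weighted_sum_exp_Yfreq weighted_sum_Yfreq)
qed

lemma exp_Yfreq_flow:
  fixes P :: "'s::finite \<Rightarrow> bool \<Rightarrow> 's pmf"
  shows "inflow P (exp_Yfreq P N \<pi> S0 t) s = (\<Sum>a\<in>UNIV. exp_Yfreq P N \<pi> S0 (Suc t) s a)"
proof -
  define occ where "occ x' = (1 / real N) * (\<Sum>i<N. of_bool (x' i = s))" for x' :: "nat \<Rightarrow> 's"
  have occ_bound: "\<bar>occ x'\<bar> \<le> 1" for x'
  proof -
    have "(\<Sum>i<N. of_bool (x' i = s)) \<le> (\<Sum>i<N. 1::real)" by (intro sum_mono) simp
    then show ?thesis by (cases "N = 0") (simp_all add: occ_def sum_nonneg divide_le_eq_1)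
  qed
  have occ_expectation:
    "measure_pmf.expectation (joint_step P N x a) occ = (1 / real N) * (\<Sum>i<N. pmf (P (x i) (a i)) s)"
    for x a
  proof -
    have "integrable (joint_step P N x a) (\<lambda>x'. of_bool (x' i = s) :: real)" for i
      by (rule measure_pmf.integrable_const_bound[where B=1]) auto
    then show ?thesis
      by (simp add: occ_def[abs_def] integral_sum expectation_joint_step_state del: sum_of_bool_eq)
  qed
  have "inflow P (exp_Yfreq P N \<pi> S0 t) s = measure_pmf.expectation (traj P N \<pi> S0 t)
      (\<lambda>h. (1 / real N) * (\<Sum>i<N. pmf (P (fst (last h) i) (snd (last h) i)) s))"
    by (simp add: inflow_eq_weighted_sum weighted_sum_exp_Yfreq weighted_sum_Yfreq)
  also have "\<dots> = measure_pmf.expectation (traj P N \<pi> S0 t)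
      (\<lambda>h. measure_pmf.expectation (joint_step P N (fst (last h)) (snd (last h))) occ)"
    by (simp add: occ_expectation)
  also have "\<dots> = measure_pmf.expectation (traj P N \<pi> S0 (Suc t)) (\<lambda>h. occ (fst (last h)))"
    using occ_bound by (rule expectation_traj_Suc[symmetric])
  also have "\<dots> = (\<Sum>a\<in>UNIV. exp_Yfreq P N \<pi> S0 (Suc t) s a)"
    by (simp add: occ_def weighted_sum_state[symmetric] weighted_sum_exp_Yfreq weighted_sum_Yfreq)
  finally show ?thesis .
qed

theorem mainTheorem9:
  fixes P :: "'s::finite \<Rightarrow> bool \<Rightarrow> 's pmf"
    and r :: "'s \<Rightarrow> bool \<Rightarrow> real"
    and \<alpha> :: real
    and ystar :: "'s \<Rightarrow> bool \<Rightarrow> real"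
  assumes alpha: "0 < \<alpha>" "\<alpha> < 1"
    and opt: "lp_optimal P r \<alpha> ystar"
    and uniq: "\<forall>y. lp_optimal P r \<alpha> y \<longrightarrow> y = ystar"
    and pos: "\<forall>s. ystar s True + ystar s False > 0"
  shows "\<exists>\<epsilon>0 > 0. \<forall>(N::nat) \<pi> S0 R D.
           N > 0 \<longrightarrow> admissible_policy N \<alpha> \<pi> \<longrightarrow>
           (\<lambda>T. (1 / real T) * (\<Sum>t<T. exp_reward P r N \<pi> S0 t)) \<longlonglongrightarrow> R \<longrightarrow>
           (\<lambda>T. (1 / real T) * (\<Sum>t<T. exp_dIC P ystar N \<pi> S0 t)) \<longlonglongrightarrow> D \<longrightarrow>
           lp_value r ystar - R \<ge> \<epsilon>0 * D"
proof -
  obtain c where "0 < c"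
    and bound: "\<And>y. lp_feasible P \<alpha> y \<Longrightarrow> c * d_IC ystar y \<le> lp_value r ystar - lp_value r y"
    using unique_optimum_d_IC_bound[OF opt uniq] by blast
  have "c * D \<le> lp_value r ystar - R"
    if N: "0 < N" and adm: "admissible_policy N \<alpha> \<pi>"
      and R: "(\<lambda>T. (1 / real T) * (\<Sum>t<T. exp_reward P r N \<pi> S0 t)) \<longlonglongrightarrow> R"
      and D: "(\<lambda>T. (1 / real T) * (\<Sum>t<T. exp_dIC P ystar N \<pi> S0 t)) \<longlonglongrightarrow> D"
    for N \<pi> S0 R D
  proof -
    let ?E = "exp_Yfreq P N \<pi> S0"
    obtain \<sigma> y where \<sigma>: "strict_mono \<sigma>" and lim: "\<And>s a. (\<lambda>n. time_avg ?E (\<sigma> n) s a) \<longlonglongrightarrow> y s a"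
      and feas: "lp_feasible P \<alpha> y"
      using time_avg_limit_point_feasible[of ?E \<alpha> P] exp_Yfreq_nonneg exp_Yfreq_total[OF N]
        exp_Yfreq_budget[OF N adm] exp_Yfreq_flow by metis
    have "R = lp_value r y"
      using R \<sigma> lim unfolding exp_reward_eq_lp_value lp_value_eq_weighted_sum
      by (rule time_avg_limit_weighted_sum)
    moreover have "D = d_IC ystar y"
      using D \<sigma> lim unfolding exp_dIC_eq_d_IC d_IC_eq_weighted_sum
      by (rule time_avg_limit_weighted_sum)
    ultimately show ?thesis using bound[OF feas] by simp
  qed
  with \<open>0 < c\<close> show ?thesis by blast
qed

end
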